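(* Let $a,b\in C\ell_{1,2}$. Then (1) $L(a)L(a^+)L(a)=L(a)$, $L(a^+)L(a)L(a^+)=L(a^+)$, $L(a)L(a^+)=(L(a)L(a^+))^T$, $L(a^+)L(a)=(L(a^+)L(a))^T$; (2) $R(a)R(a^+)R(a)=R(a)$, $R(a^+)R(a)R(a^+)=R(a^+)$, $R(a)R(a^+)=(R(a)R(a^+))^T$, $R(a^+)R(a)=(R(a^+)R(a))^T$; (3) $(L(a)R(b))^+=L(a^+)R(b^+)$, where the left side is the Moore–Penrose inverse of the real matrix $L(a)R(b)$.
   Context: $C\ell_{1,2}$ is the real Clifford algebra generated by $i_1,i_2,i_3$ with $i_1^2=1$, $i_2^2=i_3^2=-1$ and $i_ti_m=-i_mi_t$ for $t\neq m$, with real basis $e_0=1$, $e_1=i_1$, $e_2=i_2$, $e_3=i_1i_2$, $e_4=i_3$, $e_5=i_1i_3$, $e_6=i_2i_3$, $e_7=i_1i_2i_3$. For $x=\sum_{t=0}^7x_te_t$ write $\overrightarrow{x}=(x_0,\dots,x_7)^T$. $L(a)$, $R(a)$ are the real $8\times8$ matrices with $\overrightarrow{ax}=L(a)\overrightarrow{x}$, $\overrightarrow{xa}=R(a)\overrightarrow{x}$ for all $x$. The prime of $a=\sum a_te_t$ is $a'=a_0+a_1e_1-a_2e_2+a_3e_3-a_4e_4+a_5e_5-a_6e_6-a_7e_7$. For every $a$ there is a unique $x\in C\ell_{1,2}$ with $axa=a$, $xax=x$, $(ax)'=ax$, $(xa)'=xa$, denoted $a^+$ (the Moore–Penrose inverse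 of $a$). The Moore–Penrose inverse $A^+$ of a real matrix $A$ is the unique real matrix $X$ with $AXA=A$, $XAX=X$, $(AX)^T=AX$, $(XA)^T=XA$. *)

theory Defs
  imports "HOL-Analysis.Analysis"
begin

text \<open>Elements of Cl(1,2) are represented by their coordinate vectors in real^8 w.r.t. the
basis e_0,...,e_7.  Basis index t (0..7) is read as a bitmask: bit 0 = i_1, bit 1 = i_2,
bit 2 = i_3, the generators taken in increasing order.  This matches
e_0=1, e_1=i1, e_2=i2, e_3=i1 i2, e_4=i3, e_5=i1 i3, e_6=i2 i3, e_7=i1 i2 i3.\<close>

type_synonym cl12 = "real ^ 8"

definition gens :: "nat \<Rightarrow> nat set" where
  "gens s = {g. g < 3 \<and> bit s g}"

definition gen_sq :: "nat \<Rightarrow> real" where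
  "gen_sq g = (if g = 0 then 1 else -1)"

text \<open>e_s e_t = blade_sign s t * e_(s xor t): anticommute generators of t past larger
generators of s, then square coincident generators.\<close>
definition blade_sign :: "nat \<Rightarrow> nat \<Rightarrow> real" where
  "blade_sign s t =
     (-1) ^ card {(i, j). i \<in> gens s \<and> j \<in> gens t \<and> j < i}
     * (\<Prod>g\<in>gens s \<inter> gens t. gen_sq g)"

definition clmul :: "cl12 \<Rightarrow> cl12 \<Rightarrow> cl12" where
  "clmul a b = (\<chi> k. \<Sum>s<8. \<Sum>t<8.
      if (of_nat (Bit_Operations.xor s t) :: 8) = k
      then blade_sign s t * a $ (of_nat s) * b $ (of_nat t) else 0)"

definition Lmat :: "cl12 \<Rightarrow> real ^ 8 ^ 8" where
  "Lmat a = matrix (\<lambda>x. clmul a x)"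

definition Rmat :: "cl12 \<Rightarrow> real ^ 8 ^ 8" where
  "Rmat a = matrix (\<lambda>x. clmul x a)"

definition cl_prime :: "cl12 \<Rightarrow> cl12" where
  "cl_prime a = (\<chi> k. (if k \<in> {2, 4, 6, 7} then -1 else 1) * a $ k)"

definition cl_mp :: "cl12 \<Rightarrow> cl12" where
  "cl_mp a = (THE x. clmul (clmul a x) a = a \<and> clmul (clmul x a) x = x
      \<and> cl_prime (clmul a x) = clmul a x \<and> cl_prime (clmul x a) = clmul x a)"

definition mat_mp :: "real ^ 'n ^ 'm \<Rightarrow> real ^ 'm ^ 'n" where
  "mat_mp A = (THE X. A ** X ** A = A \<and> X ** A ** X = X
      \<and> transpose (A ** X) = A ** X \<and> transpose (X ** A) = X ** A)"

end

theory Submission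
  imports Defs
begin

text \<open>
  The map \<open>a \<mapsto> L(a)\<close> is an injective algebra homomorphism turning the prime into
  transposition (and \<open>a \<mapsto> R(a)\<close> an anti-homomorphism with the same property), so the
  defining equations of \<open>a\<^sup>+\<close> are exactly the Penrose equations for \<open>L(a), L(a\<^sup>+)\<close>
  and for \<open>R(a), R(a\<^sup>+)\<close>; uniqueness of \<open>a\<^sup>+\<close> follows from uniqueness of matrix
  Moore--Penrose inverses. For existence, \<open>a\<close> times its Clifford conjugate lies in the
  centre \<open>span {1, e\<^sub>7} \<cong> \<complex>\<close>; call it \<open>det a\<close>. If \<open>det a \<noteq> 0\<close>, \<open>a\<close> is invertible;
  otherwise \<open>a a' a = 2 |a|\<^sup>2 a\<close> and \<open>a' a a' = 2 |a|\<^sup>2 a'\<close>, so \<open>a' / (2 |a|\<^sup>2)\<close> is the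
  Moore--Penrose inverse.
  Finally, every \<open>L(p)\<close> commutes with every \<open>R(q)\<close>, so \<open>L(a\<^sup>+) R(b\<^sup>+)\<close> satisfies the
  Penrose equations for \<open>L(a) R(b)\<close>.
\<close>

lemma gens_eq:
  "gens 0 = {}" "gens 1 = {0}" "gens 2 = {1}" "gens 3 = {0, 1}"
  "gens 4 = {2}" "gens 5 = {0, 2}" "gens 6 = {1, 2}" "gens 7 = {0, 1, 2}"
proof -
  have "gens s = {g. g \<in> {0, 1, 2} \<and> bit s g}" for s
    unfolding gens_def by (auto simp: numeral_3_eq_3 less_Suc_eq)
  then show "gens 0 = {}" "gens 1 = {0}" "gens 2 = {1}" "gens 3 = {0, 1}"
    "gens 4 = {2}" "gens 5 = {0, 2}" "gens 6 = {1, 2}" "gens 7 = {0, 1, 2}"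
    by (auto simp: bit_nat_def)
qed

lemma blade_sign_eq_card_UN:
  "blade_sign s t =
     (-1) ^ card (\<Union>i\<in>gens s. \<Union>j\<in>gens t. if j < i then {(i, j)} else {})
     * (\<Prod>g\<in>gens s \<inter> gens t. gen_sq g)"
proof -
  have "{(i, j). i \<in> gens s \<and> j \<in> gens t \<and> j < i}
      = (\<Union>i\<in>gens s. \<Union>j\<in>gens t. if j < i then {(i, j)} else {})"
    by auto
  then show ?thesis unfolding blade_sign_def by simp
qed

lemma clmul_nth:
  "clmul a b $ 0 = a$0 * b$0 + a$1 * b$1 - a$2 * b$2 + a$3 * b$3 - a$4 * b$4 + a$5 * b$5 - a$6 * b$6 - a$7 * b$7"
  "clmul a b $ 1 = a$0 * b$1 + a$1 * b$0 + a$2 * b$3 - a$3 * b$2 + a$4 * b$5 - a$5 * b$4 - a$6 * b$7 - a$7 * b$6"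
  "clmul a b $ 2 = a$0 * b$2 + a$1 * b$3 + a$2 * b$0 - a$3 * b$1 + a$4 * b$6 - a$5 * b$7 - a$6 * b$4 - a$7 * b$5"
  "clmul a b $ 3 = a$0 * b$3 + a$1 * b$2 - a$2 * b$1 + a$3 * b$0 - a$4 * b$7 + a$5 * b$6 - a$6 * b$5 - a$7 * b$4"
  "clmul a b $ 4 = a$0 * b$4 + a$1 * b$5 - a$2 * b$6 + a$3 * b$7 + a$4 * b$0 - a$5 * b$1 + a$6 * b$2 + a$7 * b$3"
  "clmul a b $ 5 = a$0 * b$5 + a$1 * b$4 + a$2 * b$7 - a$3 * b$6 - a$4 * b$1 + a$5 * b$0 + a$6 * b$3 + a$7 * b$2"
  "clmul a b $ 6 = a$0 * b$6 + a$1 * b$7 + a$2 * b$4 - a$3 * b$5 - a$4 * b$2 + a$5 * b$3 + a$6 * b$0 + a$7 * b$1"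
  "clmul a b $ 7 = a$0 * b$7 + a$1 * b$6 - a$2 * b$5 + a$3 * b$4 + a$4 * b$3 - a$5 * b$2 + a$6 * b$1 + a$7 * b$0"
  unfolding clmul_def
  by (simp_all add: lessThan_nat_numeral blade_sign_eq_card_UN gens_eq gens_eq[simplified] gen_sq_def)

lemma cl_prime_nth:
  "cl_prime a $ 0 = a$0" "cl_prime a $ 1 = a$1" "cl_prime a $ 2 = - a$2" "cl_prime a $ 3 = a$3"
  "cl_prime a $ 4 = - a$4" "cl_prime a $ 5 = a$5" "cl_prime a $ 6 = - a$6" "cl_prime a $ 7 = - a$7"
  by (simp_all add: cl_prime_def)

lemma UNIV_8: "(UNIV :: 8 set) = {0, 1, 2, 3, 4, 5, 6, 7}"
proof -
  have "card {0 :: 8, 1, 2, 3, 4, 5, 6, 7} = CARD(8)" by simp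
  from card_subset_eq[OF finite_class.finite_UNIV subset_UNIV this] show ?thesis by simp
qed

lemma all_8: "(\<forall>k :: 8. P k) \<longleftrightarrow> P 0 \<and> P 1 \<and> P 2 \<and> P 3 \<and> P 4 \<and> P 5 \<and> P 6 \<and> P 7"
  unfolding ball_UNIV[symmetric] UNIV_8 by simp

lemma cl12_eq_iff:
  "(x :: cl12) = y \<longleftrightarrow>
     x$0 = y$0 \<and> x$1 = y$1 \<and> x$2 = y$2 \<and> x$3 = y$3 \<and> x$4 = y$4 \<and> x$5 = y$5 \<and> x$6 = y$6 \<and> x$7 = y$7"
  by (simp add: vec_eq_iff all_8)

definition cl_one :: cl12 where
  "cl_one = axis 0 1"

lemma cl_one_nth:
  "cl_one $ 0 = 1" "cl_one $ 1 = 0" "cl_one $ 2 = 0" "cl_one $ 3 = 0"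
  "cl_one $ 4 = 0" "cl_one $ 5 = 0" "cl_one $ 6 = 0" "cl_one $ 7 = 0"
  by (simp_all add: cl_one_def axis_def)

lemmas cl12_simps = cl12_eq_iff clmul_nth cl_prime_nth cl_one_nth

lemma clmul_assoc: "clmul (clmul a b) c = clmul a (clmul b c)"
  by (simp add: cl12_simps algebra_simps)

lemma clmul_one_left [simp]: "clmul cl_one a = a"
  and clmul_one_right [simp]: "clmul a cl_one = a"
  by (simp_all add: cl12_simps)

lemma clmul_zero_left [simp]: "clmul 0 a = 0"
  and clmul_zero_right [simp]: "clmul a 0 = 0"
  by (simp_all add: cl12_simps)

lemma clmul_scaleR_left: "clmul (c *\<^sub>R x) a = c *\<^sub>R clmul x a"
  and clmul_scaleR_right: "clmul a (c *\<^sub>R x) = c *\<^sub>R clmul a x"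
  by (simp_all add: cl12_simps algebra_simps)

lemma linear_clmul_left: "linear (\<lambda>x. clmul x a)"
  and linear_clmul_right: "linear (\<lambda>x. clmul a x)"
  by (rule linearI; simp add: cl12_simps algebra_simps)+

lemma cl_prime_scaleR: "cl_prime (c *\<^sub>R a) = c *\<^sub>R cl_prime a"
  by (simp add: cl12_simps)

lemma cl_prime_zero: "cl_prime 0 = 0"
  by (simp add: cl12_simps)

lemma cl_prime_one [simp]: "cl_prime cl_one = cl_one"
  by (simp add: cl12_simps)

lemma Lmat_mult_vec: "Lmat a *v x = clmul a x"
  using matrix_vector_mul(2)[OF linear_clmul_right] unfolding Lmat_def by metis

lemma Rmat_mult_vec: "Rmat a *v x = clmul x a"
  using matrix_vector_mul(2)[OF linear_clmul_left] unfolding Rmat_def by metis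

lemma Lmat_mult: "Lmat a ** Lmat b = Lmat (clmul a b)"
  by (simp add: matrix_eq matrix_vector_mul_assoc[symmetric] Lmat_mult_vec clmul_assoc)

lemma Rmat_mult: "Rmat a ** Rmat b = Rmat (clmul b a)"
  by (simp add: matrix_eq matrix_vector_mul_assoc[symmetric] Rmat_mult_vec clmul_assoc)

lemma Lmat_Rmat_commute: "Lmat a ** Rmat b = Rmat b ** Lmat a"
  by (simp add: matrix_eq matrix_vector_mul_assoc[symmetric] Lmat_mult_vec Rmat_mult_vec clmul_assoc)

lemma Lmat_Rmat_mult:
  "(Lmat p ** Rmat q) ** (Lmat r ** Rmat s) = Lmat (clmul p r) ** Rmat (clmul s q)"
  by (simp add: matrix_eq matrix_vector_mul_assoc[symmetric] Lmat_mult_vec Rmat_mult_vec clmul_assoc)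

lemma Lmat_inject: "Lmat a = Lmat b \<Longrightarrow> a = b"
  by (metis Lmat_mult_vec clmul_one_right)

lemma transpose_Lmat: "transpose (Lmat a) = Lmat (cl_prime a)"
  by (simp add: vec_eq_iff all_8 transpose_def Lmat_def matrix_def clmul_nth cl_prime_nth axis_def)

lemma transpose_Rmat: "transpose (Rmat a) = Rmat (cl_prime a)"
  by (simp add: vec_eq_iff all_8 transpose_def Rmat_def matrix_def clmul_nth cl_prime_nth axis_def)

lemma penrose_unique:
  fixes A :: "'a::comm_semiring_1 ^ 'n ^ 'm" and X Y :: "'a ^ 'm ^ 'n"
  assumes AXA: "A ** X ** A = A" and XAX: "X ** A ** X = X"
    and AX: "transpose (A ** X) = A ** X" and XA: "transpose (X ** A) = X ** A"
    and AYA: "A ** Y ** A = A" and YAY: "Y ** A ** Y = Y"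
    and AY: "transpose (A ** Y) = A ** Y" and YA: "transpose (Y ** A) = Y ** A"
  shows "X = Y"
proof -
  have "X = X ** A ** X" using XAX by simp
  also have "\<dots> = X ** transpose (A ** X)" by (simp add: AX matrix_mul_assoc)
  also have "\<dots> = X ** transpose X ** transpose A" by (simp add: matrix_transpose_mul matrix_mul_assoc)
  also have "\<dots> = X ** transpose X ** transpose (A ** Y ** A)" by (simp add: AYA)
  also have "\<dots> = X ** transpose (A ** X) ** transpose (A ** Y)"
    by (simp add: matrix_transpose_mul matrix_mul_assoc)
  also have "\<dots> = X ** (A ** X) ** (A ** Y)" by (simp add: AX AY)
  also have "\<dots> = X ** A ** Y" by (simp add: matrix_mul_assoc XAX)
  finally have X: "X = X ** A ** Y" .
  have "Y = Y ** A ** Y" using YAY by simp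
  also have "\<dots> = transpose (Y ** A) ** Y" by (simp add: YA)
  also have "\<dots> = transpose A ** transpose Y ** Y" by (simp add: matrix_transpose_mul matrix_mul_assoc)
  also have "\<dots> = transpose (A ** X ** A) ** transpose Y ** Y" by (simp add: AXA)
  also have "\<dots> = transpose (X ** A) ** transpose (Y ** A) ** Y"
    by (simp add: matrix_transpose_mul matrix_mul_assoc)
  also have "\<dots> = (X ** A) ** (Y ** A) ** Y" by (simp add: XA YA)
  also have "\<dots> = X ** A ** Y"
  proof -
    have "Y ** (A ** Y) = Y" using YAY by (simp add: matrix_mul_assoc)
    then show ?thesis by (simp add: matrix_mul_assoc[symmetric])
  qed
  finally show ?thesis using X by simp
qed

definition cl_penrose :: "cl12 \<Rightarrow> cl12 \<Rightarrow> bool" where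
  "cl_penrose a x \<longleftrightarrow> clmul (clmul a x) a = a \<and> clmul (clmul x a) x = x
     \<and> cl_prime (clmul a x) = clmul a x \<and> cl_prime (clmul x a) = clmul x a"

text \<open>Clifford conjugation: the grade involution composed with reversion.\<close>

definition cl_conj :: "cl12 \<Rightarrow> cl12" where
  "cl_conj a = (\<chi> k. (if k = 0 \<or> k = 7 then 1 else -1) * a $ k)"

text \<open>
  The centre of \<open>Cl(1,2)\<close> is spanned by \<open>1\<close> and \<open>e\<^sub>7\<close>; as \<open>e\<^sub>7\<^sup>2 = -1\<close>, the central
  elements \<open>p + q e\<^sub>7\<close> multiply like the complex numbers \<open>p + q i\<close>.
\<close>

definition cl_central :: "real \<Rightarrow> real \<Rightarrow> cl12" where
  "cl_central p q = (\<chi> k. if k = 0 then p else if k = 7 then q else 0)"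

definition cl_det_re :: "cl12 \<Rightarrow> real" where
  "cl_det_re a = clmul a (cl_conj a) $ 0"

definition cl_det_im :: "cl12 \<Rightarrow> real" where
  "cl_det_im a = clmul a (cl_conj a) $ 7"

definition cl_norm_sq :: "cl12 \<Rightarrow> real" where
  "cl_norm_sq a = a$0^2 + a$1^2 + a$2^2 + a$3^2 + a$4^2 + a$5^2 + a$6^2 + a$7^2"

lemma cl_conj_nth:
  "cl_conj a $ 0 = a$0" "cl_conj a $ 1 = - a$1" "cl_conj a $ 2 = - a$2" "cl_conj a $ 3 = - a$3"
  "cl_conj a $ 4 = - a$4" "cl_conj a $ 5 = - a$5" "cl_conj a $ 6 = - a$6" "cl_conj a $ 7 = a$7"
  by (simp_all add: cl_conj_def)

lemma cl_central_nth:
  "cl_central p q $ 0 = p" "cl_central p q $ 1 = 0" "cl_central p q $ 2 = 0"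
  "cl_central p q $ 3 = 0" "cl_central p q $ 4 = 0" "cl_central p q $ 5 = 0"
  "cl_central p q $ 6 = 0" "cl_central p q $ 7 = q"
  by (simp_all add: cl_central_def)

lemmas cl12_conj_simps = clmul_nth cl_conj_nth cl_central_nth cl_prime_nth cl_one_nth

lemma clmul_cl_conj_right: "clmul a (cl_conj a) = cl_central (cl_det_re a) (cl_det_im a)"
  unfolding cl12_eq_iff cl_det_re_def cl_det_im_def by (simp add: cl12_conj_simps algebra_simps)

lemma clmul_cl_conj_left: "clmul (cl_conj a) a = cl_central (cl_det_re a) (cl_det_im a)"
  unfolding cl12_eq_iff cl_det_re_def cl_det_im_def by (simp add: cl12_conj_simps algebra_simps)

lemma cl_central_commute: "clmul (cl_central p q) x = clmul x (cl_central p q)"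
  unfolding cl12_eq_iff by (simp add: cl12_conj_simps algebra_simps)

lemma clmul_cl_central:
  "clmul (cl_central p q) (cl_central r s) = cl_central (p * r - q * s) (p * s + q * r)"
  unfolding cl12_eq_iff by (simp add: cl12_conj_simps algebra_simps)

lemma cl_central_one: "cl_central 1 0 = cl_one"
  unfolding cl12_eq_iff by (simp add: cl12_conj_simps)

lemma cl_central_zero: "cl_central 0 0 = 0"
  unfolding cl12_eq_iff by (simp add: cl12_conj_simps)

lemma clmul_clmul_cl_prime:
  "clmul (clmul a (cl_prime a)) a
     = (2 * cl_norm_sq a) *\<^sub>R a - clmul (cl_central (cl_det_re a) (cl_det_im a)) (cl_prime (cl_conj a))"
  unfolding cl12_eq_iff cl_det_re_def cl_det_im_def cl_norm_sq_def
  by (simp add: cl12_conj_simps algebra_simps power2_eq_square)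

lemma clmul_clmul_cl_prime':
  "clmul (clmul (cl_prime a) a) (cl_prime a)
     = (2 * cl_norm_sq a) *\<^sub>R cl_prime a - clmul (cl_conj a) (cl_central (cl_det_re a) (- cl_det_im a))"
  unfolding cl12_eq_iff cl_det_re_def cl_det_im_def cl_norm_sq_def
  by (simp add: cl12_conj_simps algebra_simps power2_eq_square)

lemma cl_prime_clmul_cl_prime: "cl_prime (clmul a (cl_prime a)) = clmul a (cl_prime a)"
  unfolding cl12_eq_iff by (simp add: cl12_conj_simps algebra_simps)

lemma cl_prime_clmul_cl_prime': "cl_prime (clmul (cl_prime a) a) = clmul (cl_prime a) a"
  unfolding cl12_eq_iff by (simp add: cl12_conj_simps algebra_simps)

lemma cl_norm_sq_eq_0: "cl_norm_sq a = 0 \<Longrightarrow> a = 0"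
proof -
  assume "cl_norm_sq a = 0"
  then have "a$0^2 = 0 \<and> a$1^2 = 0 \<and> a$2^2 = 0 \<and> a$3^2 = 0 \<and> a$4^2 = 0 \<and> a$5^2 = 0 \<and> a$6^2 = 0 \<and> a$7^2 = 0"
    unfolding cl_norm_sq_def
    using zero_le_power2[of "a$0"] zero_le_power2[of "a$1"] zero_le_power2[of "a$2"] zero_le_power2[of "a$3"]
      zero_le_power2[of "a$4"] zero_le_power2[of "a$5"] zero_le_power2[of "a$6"] zero_le_power2[of "a$7"]
    by linarith
  then show ?thesis unfolding cl12_eq_iff by simp
qed

lemma cl_penrose_det_nonzero:
  assumes "cl_det_re a ^ 2 + cl_det_im a ^ 2 \<noteq> 0"
  defines "d \<equiv> cl_det_re a ^ 2 + cl_det_im a ^ 2"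
  shows "cl_penrose a (clmul (cl_conj a) (cl_central (cl_det_re a / d) (- cl_det_im a / d)))"
proof -
  define z where "z = cl_central (cl_det_re a / d) (- cl_det_im a / d)"
  define x where "x = clmul (cl_conj a) z"
  have det_inverse: "clmul (cl_central (cl_det_re a) (cl_det_im a)) z = cl_one"
  proof -
    have "clmul (cl_central (cl_det_re a) (cl_det_im a)) z
        = cl_central (cl_det_re a * (cl_det_re a / d) - cl_det_im a * (- cl_det_im a / d))
            (cl_det_re a * (- cl_det_im a / d) + cl_det_im a * (cl_det_re a / d))"
      unfolding z_def by (rule clmul_cl_central)
    also have "cl_det_re a * (cl_det_re a / d) - cl_det_im a * (- cl_det_im a / d)
        = (cl_det_re a ^ 2 + cl_det_im a ^ 2) / d"
      by (simp add: power2_eq_square add_divide_distrib)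
    also have "\<dots> = 1" using assms by simp
    also have "cl_det_re a * (- cl_det_im a / d) + cl_det_im a * (cl_det_re a / d) = 0"
      by (simp add: field_simps)
    finally show ?thesis by (simp add: cl_central_one)
  qed
  have ax: "clmul a x = cl_one"
    unfolding x_def clmul_assoc[symmetric] clmul_cl_conj_right by (rule det_inverse)
  have xa: "clmul x a = cl_one"
  proof -
    have "clmul x a = clmul (cl_conj a) (clmul z a)" unfolding x_def by (simp add: clmul_assoc)
    also have "clmul z a = clmul a z" unfolding z_def by (rule cl_central_commute)
    also have "clmul (cl_conj a) (clmul a z) = clmul (cl_central (cl_det_re a) (cl_det_im a)) z"
      by (simp add: clmul_assoc[symmetric] clmul_cl_conj_left)
    finally show ?thesis using det_inverse by simp
  qed
  have "cl_penrose a x" unfolding cl_penrose_def ax xa by simp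
  then show ?thesis unfolding x_def z_def .
qed

lemma cl_penrose_det_zero:
  assumes "cl_det_re a ^ 2 + cl_det_im a ^ 2 = 0"
  shows "cl_penrose a ((1 / (2 * cl_norm_sq a)) *\<^sub>R cl_prime a)"
proof -
  have det: "cl_central (cl_det_re a) (cl_det_im a) = 0" "cl_central (cl_det_re a) (- cl_det_im a) = 0"
    using assms by (simp_all add: sum_power2_eq_zero_iff cl_central_zero)
  define s where "s = 1 / (2 * cl_norm_sq a)"
  define x where "x = s *\<^sub>R cl_prime a"
  have axa: "clmul (clmul a x) a = (s * (2 * cl_norm_sq a)) *\<^sub>R a"
    unfolding x_def by (simp add: clmul_scaleR_right clmul_scaleR_left clmul_clmul_cl_prime det)
  have xax: "clmul (clmul x a) x = (s * s * (2 * cl_norm_sq a)) *\<^sub>R cl_prime a"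
    unfolding x_def by (simp add: clmul_scaleR_right clmul_scaleR_left clmul_clmul_cl_prime' det)
  have "cl_penrose a x"
  proof (cases "cl_norm_sq a = 0")
    case True
    then have "a = 0" by (rule cl_norm_sq_eq_0)
    then show ?thesis unfolding cl_penrose_def x_def
      by (simp add: cl_prime_scaleR cl_prime_zero)
  next
    case False
    have "s * (2 * cl_norm_sq a) = 1" "s * s * (2 * cl_norm_sq a) = s"
      unfolding s_def using False by simp_all
    then show ?thesis unfolding cl_penrose_def axa xax
      by (simp add: x_def clmul_scaleR_right clmul_scaleR_left cl_prime_scaleR
          cl_prime_clmul_cl_prime cl_prime_clmul_cl_prime')
  qed
  then show ?thesis unfolding x_def s_def .
qed

lemma cl_penrose_Lmat:
  assumes "cl_penrose a x"
  shows "Lmat a ** Lmat x ** Lmat a = Lmat a" "Lmat x ** Lmat a ** Lmat x = Lmat x"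
    "transpose (Lmat a ** Lmat x) = Lmat a ** Lmat x" "transpose (Lmat x ** Lmat a) = Lmat x ** Lmat a"
  using assms unfolding cl_penrose_def by (simp_all add: Lmat_mult transpose_Lmat)

lemma cl_penrose_Rmat:
  assumes "cl_penrose a x"
  shows "Rmat a ** Rmat x ** Rmat a = Rmat a" "Rmat x ** Rmat a ** Rmat x = Rmat x"
    "transpose (Rmat a ** Rmat x) = Rmat a ** Rmat x" "transpose (Rmat x ** Rmat a) = Rmat x ** Rmat a"
  using assms unfolding cl_penrose_def by (simp_all add: Rmat_mult transpose_Rmat clmul_assoc)

lemma cl_penrose_unique:
  assumes "cl_penrose a x" "cl_penrose a y"
  shows "x = y"
proof -
  have "Lmat x = Lmat y"
    using penrose_unique[OF cl_penrose_Lmat[OF assms(1)] cl_penrose_Lmat[OF assms(2)]] .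
  then show ?thesis by (rule Lmat_inject)
qed

lemma cl_penrose_cl_mp: "cl_penrose a (cl_mp a)"
proof -
  obtain x where x: "cl_penrose a x"
    using cl_penrose_det_nonzero cl_penrose_det_zero by blast
  have "cl_penrose a (THE x. cl_penrose a x)"
    by (rule theI[of "cl_penrose a", OF x]) (rule cl_penrose_unique[OF _ x])
  then show ?thesis unfolding cl_mp_def cl_penrose_def[symmetric] .
qed

lemma transpose_Lmat_Rmat: "transpose (Lmat a ** Rmat b) = Lmat (cl_prime a) ** Rmat (cl_prime b)"
  by (simp add: matrix_transpose_mul transpose_Lmat transpose_Rmat Lmat_Rmat_commute)

lemma mat_mp_Lmat_Rmat:
  assumes a: "cl_penrose a x" and b: "cl_penrose b y"
  shows "mat_mp (Lmat a ** Rmat b) = Lmat x ** Rmat y"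
proof -
  let ?A = "Lmat a ** Rmat b"
  let ?X = "Lmat x ** Rmat y"
  have b': "clmul b (clmul y b) = b" "clmul y (clmul b y) = y"
    using b unfolding cl_penrose_def by (simp_all add: clmul_assoc)
  have penrose: "?A ** ?X ** ?A = ?A" "?X ** ?A ** ?X = ?X"
    "transpose (?A ** ?X) = ?A ** ?X" "transpose (?X ** ?A) = ?X ** ?A"
    using a b b' unfolding cl_penrose_def by (simp_all add: Lmat_Rmat_mult transpose_Lmat_Rmat)
  show ?thesis
    unfolding mat_mp_def
  proof (rule the_equality)
    show "?A ** ?X ** ?A = ?A \<and> ?X ** ?A ** ?X = ?X
        \<and> transpose (?A ** ?X) = ?A ** ?X \<and> transpose (?X ** ?A) = ?X ** ?A"
      using penrose by blast
    fix X'
    assume "?A ** X' ** ?A = ?A \<and> X' ** ?A ** X' = X'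
        \<and> transpose (?A ** X') = ?A ** X' \<and> transpose (X' ** ?A) = X' ** ?A"
    then show "X' = ?X"
      using penrose_unique[of ?A X' ?X] penrose by blast
  qed
qed

theorem proposition4p2:
  fixes a b :: cl12
  shows "Lmat a ** Lmat (cl_mp a) ** Lmat a = Lmat a
       \<and> Lmat (cl_mp a) ** Lmat a ** Lmat (cl_mp a) = Lmat (cl_mp a)
       \<and> Lmat a ** Lmat (cl_mp a) = transpose (Lmat a ** Lmat (cl_mp a))
       \<and> Lmat (cl_mp a) ** Lmat a = transpose (Lmat (cl_mp a) ** Lmat a)
       \<and> Rmat a ** Rmat (cl_mp a) ** Rmat a = Rmat a
       \<and> Rmat (cl_mp a) ** Rmat a ** Rmat (cl_mp a) = Rmat (cl_mp a)
       \<and> Rmat a ** Rmat (cl_mp a) = transpose (Rmat a ** Rmat (cl_mp a))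
       \<and> Rmat (cl_mp a) ** Rmat a = transpose (Rmat (cl_mp a) ** Rmat a)
       \<and> mat_mp (Lmat a ** Rmat b) = Lmat (cl_mp a) ** Rmat (cl_mp b)"
  using cl_penrose_Lmat[OF cl_penrose_cl_mp[of a]] cl_penrose_Rmat[OF cl_penrose_cl_mp[of a]]
    mat_mp_Lmat_Rmat[OF cl_penrose_cl_mp cl_penrose_cl_mp, of a b]
  by simp

end
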